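(* Let $m\geqslant 1$ and $n\geqslant 0$ be integers. Consider the $n$-dimensional corner preference parking problem with $L=2m$ and $\ell=m$, and let $Y_n$ be the number of cars parked after the first car at the time of saturation (with $Y_0=0$). Then for every $n\geqslant 1$, \[ \mathbb{E}(u^{Y_n}) = u \sum_{1\leqslant k\leqslant n} \binom{n}{k}\frac{m^k-(m-1)^k}{(m+1)^n-m^n}\, \mathbb{E}\bigl(u^{Y_{n-k}}\bigr). \]
   Context: Corner preference parking problem: cars are integral translates of the cube $[0,m]^n$ inside $[0,2m]^n$, each represented by its corner closest to the origin, i.e. by a point of $Z_m^n:=\{\mathbf{a}=(a_1,\dots,a_n): a_j\in\{0,1,\dots,m\}\}$. Let $\rho(\mathbf{x},\mathbf{y}):=\max_{1\leqslant j\leqslant n}|x_j-y_j|$. For $\mathbf{a}\in Z_m^n$ let $S(\mathbf{a}):=\{\mathbf{x}\in Z_m^n: 0\leqslant x_j\leqslant a_j,\ j=1,\dots,n\}$, $U(\mathbf{a},m):=\{\mathbf{x}\in Z_m^n:\rho(\mathbf{x},\mathbf{a})<m\}$ and $S_U(\mathbf{a},m):=S(\mathbf{a})\setminus U(\mathbf{a},m)$. The first car is parked at $\mathbf{a}(1)=(m,\dots,m)$. Given the most recently parked car $\mathbf{a}(k)$, the next car $\mathbf{a}(k+1)$ is chosen uniformly at random among the points of $S_U(\mathbf{a}(k),m)$ (so each new car is coordinatewise no larger than the previous one and does not overlap the previously parked cars); the process stops (saturation) when no such position exists. All possible parking positions are equally likely at each stage. *)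

theory Defs
  imports "HOL-Probability.Probability"
begin

text \<open>Points of Z_m^n are represented as lists of naturals of length n
  (coordinate j is the list entry at index j, j < n).\<close>

definition Zm :: "nat \<Rightarrow> nat \<Rightarrow> nat list set" where
  "Zm m n = {a. length a = n \<and> (\<forall>j<n. a ! j \<le> m)}"

definition rho :: "nat list \<Rightarrow> nat list \<Rightarrow> nat" where
  "rho x y = Max (insert 0 {nat \<bar>int (x ! j) - int (y ! j)\<bar> | j. j < length x})"

definition Sbox :: "nat \<Rightarrow> nat \<Rightarrow> nat list \<Rightarrow> nat list set" where
  "Sbox m n a = {x \<in> Zm m n. \<forall>j<n. x ! j \<le> a ! j}"

definition Uball :: "nat \<Rightarrow> nat \<Rightarrow> nat list \<Rightarrow> nat list set" where
  "Uball m n a = {x \<in> Zm m n. rho x a < m}"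

definition SU :: "nat \<Rightarrow> nat \<Rightarrow> nat list \<Rightarrow> nat list set" where
  "SU m n a = Sbox m n a - Uball m n a"

lemma finite_Zm: "finite (Zm m n)"
proof -
  have "Zm m n \<subseteq> {xs. set xs \<subseteq> {0..m} \<and> length xs = n}"
    by (auto simp: Zm_def in_set_conv_nth)
  moreover have "finite {xs. set xs \<subseteq> {0..m} \<and> length xs = n}"
    by (rule finite_lists_length_eq) simp
  ultimately show ?thesis by (rule finite_subset)
qed

lemma finite_SU: "finite (SU m n a)"
  using finite_Zm by (auto simp: SU_def Sbox_def intro: finite_subset)

lemma SU_sum_less:
  assumes "a \<in> Zm m n" "m \<noteq> 0" "x \<in> SU m n a"
  shows "sum_list x < sum_list a"
proof -
  have lx: "length x = n" and la: "length a = n" and le: "\<forall>j<n. x ! j \<le> a ! j"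
    and r: "\<not> rho x a < m"
    using assms by (auto simp: SU_def Sbox_def Uball_def Zm_def)
  have "\<exists>j<n. x ! j \<noteq> a ! j"
  proof (rule ccontr)
    assume "\<not> ?thesis"
    then have "{nat \<bar>int (x ! j) - int (a ! j)\<bar> | j. j < length x} \<subseteq> {0}"
      using lx by auto
    then have "rho x a = 0" unfolding rho_def
      by (metis (no_types, lifting) Max_singleton insert_absorb2 subset_singletonD
          insert_absorb singletonI)
    with r assms(2) show False by simp
  qed
  then obtain j where j: "j < n" "x ! j < a ! j" using le by force
  have "sum_list x = (\<Sum>i<n. x ! i)" using lx by (simp add: sum_list_sum_nth atLeast0LessThan)
  also have "\<dots> < (\<Sum>i<n. a ! i)"
    by (rule sum_strict_mono_ex1) (use le j in auto)
  also have "\<dots> = sum_list a" using la by (simp add: sum_list_sum_nth atLeast0LessThan)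
  finally show ?thesis .
qed

text \<open>Distribution of the number of cars parked after the car at position a
  until saturation: if S_U(a,m) is empty the process stops; otherwise the next car
  is uniform on S_U(a,m). (The guards a \<notin> Z_m^n and m = 0 are irrelevant for the
  stated theorem and only ensure totality.)\<close>
function parkY :: "nat \<Rightarrow> nat \<Rightarrow> nat list \<Rightarrow> nat pmf" where
  "parkY m n a =
     (if a \<notin> Zm m n \<or> m = 0 \<or> SU m n a = {} then return_pmf 0
      else pmf_of_set (SU m n a) \<bind> (\<lambda>x. map_pmf Suc (parkY m n x)))"
  by auto
termination
proof (relation "Wellfounded.measure (\<lambda>(m, n, a). sum_list a)")
  fix m n a x
  assume "\<not> (a \<notin> Zm m n \<or> m = 0 \<or> SU m n a = {})" "x \<in> set_pmf (pmf_of_set (SU m n a))"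
  then show "((m, n, x), m, n, a) \<in> Wellfounded.measure (\<lambda>(m, n, a). sum_list a)"
    using SU_sum_less[of a m n x] finite_SU[of m n a] by auto
qed simp

definition Y :: "nat \<Rightarrow> nat \<Rightarrow> nat pmf" where
  "Y m n = parkY m n (replicate n m)"

end

theory Submission
  imports Defs
begin

text \<open>Call a coordinate of a car \<open>a\<close> full if \<open>a\<^sub>j = m\<close>. A point \<open>y \<le> a\<close> avoids the
  previous car iff \<open>y\<^sub>j = 0\<close> for some full coordinate \<open>j\<close>, and \<open>y\<^sub>j = m\<close> is only possible
  where \<open>a\<^sub>j = m\<close>. Counting the admissible points by their number of full coordinates,
  every non-full coordinate of \<open>a\<close> contributes just a factor \<open>a\<^sub>j + 1\<close>, while \<open>c\<close> full ones
  give \<open>C(c,k) (m\<^sup>k - (m-1)\<^sup>k)\<close> points with \<open>c - k\<close> full coordinates. So the law of the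
  number of full coordinates of the next car depends only on the number \<open>c\<close> of full
  coordinates of the current one, the process started at \<open>a\<close> is distributed like \<open>Y\<^sub>c\<close>,
  and the recursion is the first step from \<open>(m,\<dots>,m)\<close>.\<close>

lemma map_pmf_of_set_eqI:
  fixes h :: "'a \<Rightarrow> 'c" and k :: "'b \<Rightarrow> 'c"
  assumes "finite A" "finite B" "A \<noteq> {}"
    and sums: "\<And>G :: 'c \<Rightarrow> real. (\<Sum>y\<in>A. G (h y)) = c * (\<Sum>z\<in>B. G (k z))"
  shows "map_pmf h (pmf_of_set A) = map_pmf k (pmf_of_set B)"
proof (rule pmf_eqI)
  fix v
  have card: "real (card A) = c * real (card B)"
    using sums[of "\<lambda>_. 1"] by simp
  with assms(1,3) have "c \<noteq> 0" "B \<noteq> {}" by auto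
  have "pmf (map_pmf h (pmf_of_set A)) v = (\<Sum>y\<in>A. indicator {v} (h y)) / real (card A)"
    using assms(1,3) by (simp add: map_pmf_def pmf_bind_pmf_of_set)
  also have "\<dots> = (\<Sum>z\<in>B. indicator {v} (k z)) / real (card B)"
    using sums[of "indicator {v}"] card \<open>c \<noteq> 0\<close> by simp
  also have "\<dots> = pmf (map_pmf k (pmf_of_set B)) v"
    using assms(2) \<open>B \<noteq> {}\<close> by (simp add: map_pmf_def pmf_bind_pmf_of_set)
  finally show "pmf (map_pmf h (pmf_of_set A)) v = pmf (map_pmf k (pmf_of_set B)) v" .
qed

definition lower_box :: "nat \<Rightarrow> nat \<Rightarrow> nat list \<Rightarrow> nat list set" where
  "lower_box d m x =
     {y. length y = length x \<and> (\<forall>j<length x. y ! j \<le> x ! j \<and> (x ! j = m \<longrightarrow> d \<le> y ! j))}"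

lemma lower_box_Nil [simp]: "lower_box d m [] = {[]}"
  by (auto simp: lower_box_def)

lemma lower_box_Cons:
  "lower_box d m (a # x) = (\<lambda>(b, l). b # l) ` ({(if a = m then d else 0)..a} \<times> lower_box d m x)"
proof (intro set_eqI iffI)
  fix y assume "y \<in> lower_box d m (a # x)"
  then obtain b l where "y = b # l" "b \<in> {(if a = m then d else 0)..a}" "l \<in> lower_box d m x"
    by (cases y) (fastforce simp: lower_box_def)+
  then show "y \<in> (\<lambda>(b, l). b # l) ` ({(if a = m then d else 0)..a} \<times> lower_box d m x)"
    by force
next
  fix y assume "y \<in> (\<lambda>(b, l). b # l) ` ({(if a = m then d else 0)..a} \<times> lower_box d m x)"
  then show "y \<in> lower_box d m (a # x)"
    by (auto simp: lower_box_def nth_Cons split: nat.splits if_splits)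
qed

lemma finite_lower_box: "finite (lower_box d m x)"
  by (induction x) (simp_all add: lower_box_Cons)

lemma sum_Cons_image:
  "(\<Sum>y\<in>(\<lambda>(b, l). b # l) ` (A \<times> B). F y) = (\<Sum>b\<in>A. \<Sum>l\<in>B. F (b # l))"
proof -
  have "inj_on (\<lambda>(b, l). b # l) (A \<times> B)" by (auto simp: inj_on_def)
  then show ?thesis by (simp add: sum.reindex sum.cartesian_product case_prod_beta')
qed

fun binomial_shift :: "real \<Rightarrow> nat \<Rightarrow> (nat \<Rightarrow> real) \<Rightarrow> real" where
  "binomial_shift b 0 G = G 0"
| "binomial_shift b (Suc c) G = binomial_shift b c (\<lambda>k. G (Suc k)) + b * binomial_shift b c G"

lemma binomial_shift_eq:
  "binomial_shift b c G = (\<Sum>k=0..c. real (c choose k) * b ^ k * G (c - k))"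
proof (induction c arbitrary: G)
  case 0 then show ?case by simp
next
  case (Suc c)
  have "(\<Sum>k=0..Suc c. real (Suc c choose k) * b ^ k * G (Suc c - k))
     = G (Suc c) + (\<Sum>k=0..c. real (c choose Suc k) * b ^ Suc k * G (c - k))
       + (\<Sum>k=0..c. real (c choose k) * b ^ Suc k * G (c - k))"
    by (subst sum.atLeast0_atMost_Suc_shift) (simp add: algebra_simps sum.distrib)
  also have "G (Suc c) + (\<Sum>k=0..c. real (c choose Suc k) * b ^ Suc k * G (c - k))
      = (\<Sum>k=0..c. real (c choose k) * b ^ k * G (Suc c - k))"
    using sum.atLeast0_atMost_Suc_shift[of "\<lambda>k. real (c choose k) * b ^ k * G (Suc c - k)" c]
    by (simp add: binomial_eq_0)
  finally show ?case
    using Suc[of G] Suc[of "\<lambda>k. G (Suc k)"]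
    by (simp add: sum_distrib_left algebra_simps Suc_diff_le)
qed

lemma binomial_shift_one: "binomial_shift b c (\<lambda>_. 1) = (b + 1) ^ c"
  by (induction c) (simp_all add: algebra_simps)

definition free_weight :: "nat \<Rightarrow> nat list \<Rightarrow> real" where
  "free_weight m x = (\<Prod>v\<leftarrow>x. if v = m then 1 else real v + 1)"

lemma free_weight_pos: "free_weight m x > 0"
  by (induction x) (auto simp: free_weight_def)

lemma free_weight_replicate: "free_weight m (replicate c m) = 1"
  by (induction c) (auto simp: free_weight_def)

lemma sum_lower_box_count:
  assumes "d \<le> m" "\<forall>v\<in>set x. v \<le> m"
  shows "(\<Sum>y\<in>lower_box d m x. G (count_list y m))
    = free_weight m x * binomial_shift (real (m - d)) (count_list x m) G"
  using assms(2)
proof (induction x arbitrary: G)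
  case Nil then show ?case by (simp add: free_weight_def)
next
  case (Cons a x)
  then have IH: "\<And>G. (\<Sum>y\<in>lower_box d m x. G (count_list y m))
      = free_weight m x * binomial_shift (real (m - d)) (count_list x m) G" by auto
  show ?case
  proof (cases "a = m")
    case True
    have "{d..m} = insert m {d..<m}" using assms(1) by auto
    then have "(\<Sum>y\<in>lower_box d m (a # x). G (count_list y m))
        = (\<Sum>l\<in>lower_box d m x. G (Suc (count_list l m)))
          + real (m - d) * (\<Sum>l\<in>lower_box d m x. G (count_list l m))"
      using True by (simp add: lower_box_Cons sum_Cons_image finite_lower_box)
    then show ?thesis
      using True IH[of G] IH[of "\<lambda>k. G (Suc k)"] by (simp add: free_weight_def algebra_simps)
  next
    case False
    then have "(\<Sum>y\<in>lower_box d m (a # x). G (count_list y m))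
        = (real a + 1) * (\<Sum>l\<in>lower_box d m x. G (count_list l m))"
      using Cons.prems by (simp add: lower_box_Cons sum_Cons_image)
    then show ?thesis
      using False IH[of G] by (simp add: free_weight_def)
  qed
qed

lemma rho_less_iff:
  assumes "m > 0"
  shows "rho y x < m \<longleftrightarrow> (\<forall>j<length y. nat \<bar>int (y ! j) - int (x ! j)\<bar> < m)"
proof -
  have "finite {nat \<bar>int (y ! j) - int (x ! j)\<bar> | j. j < length y}"
    by (simp add: setcompr_eq_image)
  then show ?thesis
    unfolding rho_def using assms by (subst Max_less_iff) auto
qed

lemma SU_eq_lower_box_diff:
  assumes "x \<in> Zm m n" "m \<ge> 1"
  shows "SU m n x = lower_box 0 m x - lower_box 1 m x"
proof -
  have x: "length x = n" "\<forall>j<n. x ! j \<le> m" using assms(1) by (auto simp: Zm_def)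
  have coord: "nat \<bar>int b - int a\<bar> < m \<longleftrightarrow> (a = m \<longrightarrow> 1 \<le> b)" if "b \<le> a" "a \<le> m" for a b
    using that assms(2) by auto
  have "y \<in> Uball m n x \<longleftrightarrow> y \<in> lower_box 1 m x" if "y \<in> lower_box 0 m x" for y
    using that x assms(2) coord
    by (auto simp: Uball_def lower_box_def Zm_def rho_less_iff intro: order_trans)
  moreover have "Sbox m n x = lower_box 0 m x"
    using x by (auto simp: Sbox_def lower_box_def Zm_def intro: order_trans)
  ultimately show ?thesis
    unfolding SU_def by blast
qed

lemma sum_SU_count:
  assumes "x \<in> Zm m n" "m \<ge> 1"
  shows "(\<Sum>y\<in>SU m n x. G (count_list y m)) = free_weight m x *
    (binomial_shift (real m) (count_list x m) G - binomial_shift (real (m - 1)) (count_list x m) G)"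
proof -
  have "\<forall>v\<in>set x. v \<le> m" using assms(1) by (auto simp: Zm_def in_set_conv_nth)
  moreover have "lower_box 1 m x \<subseteq> lower_box 0 m x" by (auto simp: lower_box_def)
  ultimately show ?thesis
    using assms sum_lower_box_count[of 0 m x G] sum_lower_box_count[of 1 m x G]
    by (simp add: SU_eq_lower_box_diff sum_diff finite_lower_box algebra_simps)
qed

lemma count_list_replicate_self: "count_list (replicate c a) a = c"
  by (induction c) auto

lemma replicate_in_Zm: "replicate n m \<in> Zm m n"
  by (simp add: Zm_def)

lemma count_list_times_le_sum_list: "m * count_list x m \<le> sum_list x"
  by (induction x) (auto simp: algebra_simps)

lemma finite_set_pmf_parkY: "finite (set_pmf (parkY m n a))"
proof (induction m n a rule: parkY.induct)
  case (1 m n a)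
  then show ?case
    using finite_SU[of m n a] by (subst parkY.simps) (simp add: set_bind_pmf)
qed

lemma parkY_unfold:
  assumes "m \<ge> 1" "x \<in> Zm m n" "SU m n x \<noteq> {}"
    and "\<And>y. y \<in> SU m n x \<Longrightarrow> parkY m n y = F y"
  shows "parkY m n x = pmf_of_set (SU m n x) \<bind> (\<lambda>y. map_pmf Suc (F y))"
proof -
  have "parkY m n x = pmf_of_set (SU m n x) \<bind> (\<lambda>y. map_pmf Suc (parkY m n y))"
    using assms(1-3) by (subst parkY.simps) simp
  also have "\<dots> = pmf_of_set (SU m n x) \<bind> (\<lambda>y. map_pmf Suc (F y))"
    using assms(3,4) finite_SU[of m n x] by (intro bind_pmf_cong) (simp_all del: parkY.simps)
  finally show ?thesis .
qed

lemma parkY_eq_Y_count: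
  assumes "m \<ge> 1" "x \<in> Zm m n"
  shows "parkY m n x = Y m (count_list x m)"
  using assms(2)
proof (induction "sum_list x" arbitrary: n x rule: less_induct)
  case less
  define c where "c = count_list x m"
  define r where "r = replicate c m"
  have r: "r \<in> Zm m c" "count_list r m = c" "Y m c = parkY m c r"
    by (simp_all add: r_def c_def Y_def replicate_in_Zm count_list_replicate_self)
  have step: "parkY m k z = map_pmf (\<lambda>y. count_list y m) (pmf_of_set (SU m k z))
      \<bind> (\<lambda>i. map_pmf Suc (Y m i))"
    if "z \<in> Zm m k" "sum_list z \<le> sum_list x" "SU m k z \<noteq> {}" for k z
  proof -
    have "parkY m k y = Y m (count_list y m)" if "y \<in> SU m k z" for y
      using less.hyps SU_sum_less[of z m k y] \<open>z \<in> Zm m k\<close> \<open>sum_list z \<le> sum_list x\<close> assms(1) that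
      by (auto simp: SU_def Sbox_def)
    then show ?thesis
      using parkY_unfold[OF assms(1) that(1,3)] by (simp add: bind_map_pmf)
  qed
  have sums: "(\<Sum>y\<in>SU m n x. G (count_list y m)) = free_weight m x * (\<Sum>z\<in>SU m c r. G (count_list z m))"
    for G :: "nat \<Rightarrow> real"
    using sum_SU_count[OF less.prems assms(1)] sum_SU_count[OF r(1) assms(1)] r(2)
    by (simp add: c_def r_def free_weight_replicate)
  have "real (card (SU m n x)) = free_weight m x * real (card (SU m c r))"
    using sums[of "\<lambda>_. 1"] by simp
  then have empty_iff: "SU m n x = {} \<longleftrightarrow> SU m c r = {}"
    using free_weight_pos[of m x] finite_SU[of m n x] finite_SU[of m c r] by auto
  show ?case
  proof (cases "SU m n x = {}")
    case True
    then have "parkY m n x = return_pmf 0" "parkY m c r = return_pmf 0"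
      using empty_iff by simp_all
    then show ?thesis
      using r(3) by (simp add: c_def)
  next
    case False
    \<comment> \<open>so the induction hypothesis also covers the successors of \<open>r\<close>\<close>
    have "sum_list r \<le> sum_list x"
      using count_list_times_le_sum_list[of m x] by (simp add: r_def c_def sum_list_replicate mult.commute)
    moreover have "map_pmf (\<lambda>y. count_list y m) (pmf_of_set (SU m n x))
        = map_pmf (\<lambda>y. count_list y m) (pmf_of_set (SU m c r))"
      using False by (rule map_pmf_of_set_eqI[OF finite_SU finite_SU _ sums])
    ultimately show ?thesis
      using step[OF less.prems order.refl False] step[OF r(1)] False empty_iff r(3)
      by (simp add: c_def)
  qed
qed

lemma card_SU_replicate:
  assumes "m \<ge> 1"
  shows "real (card (SU m n (replicate n m))) = (real m + 1) ^ n - real m ^ n"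
  using sum_SU_count[OF replicate_in_Zm assms, of "\<lambda>_. 1"] assms
  by (simp add: binomial_shift_one free_weight_replicate count_list_replicate_self of_nat_diff)

lemma Y_unfold:
  assumes "m \<ge> 1" "n \<ge> 1"
  shows "SU m n (replicate n m) \<noteq> {}"
    and "Y m n = pmf_of_set (SU m n (replicate n m)) \<bind> (\<lambda>y. map_pmf Suc (Y m (count_list y m)))"
proof -
  have "real m ^ n < (real m + 1) ^ n"
    using assms(2) by (intro power_strict_mono) auto
  then show ne: "SU m n (replicate n m) \<noteq> {}"
    using card_SU_replicate[OF assms(1), of n] by auto
  show "Y m n = pmf_of_set (SU m n (replicate n m)) \<bind> (\<lambda>y. map_pmf Suc (Y m (count_list y m)))"
    unfolding Y_def[of m n]
    by (rule parkY_unfold[OF assms(1) replicate_in_Zm ne])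
       (auto simp: SU_def Sbox_def parkY_eq_Y_count[OF assms(1)] simp del: parkY.simps)
qed

theorem mainTheorem1:
  fixes m n :: nat and u :: real
  assumes "m \<ge> 1" and "n \<ge> 1"
  shows "measure_pmf.expectation (Y m n) (\<lambda>k. u ^ k) =
    u * (\<Sum>k = 1..n. real (n choose k) *
          ((real m ^ k - real (m - 1) ^ k) / ((real m + 1) ^ n - real m ^ n)) *
          measure_pmf.expectation (Y m (n - k)) (\<lambda>j. u ^ j))"
proof -
  define r where "r = replicate n m"
  define E where "E k = measure_pmf.expectation (Y m k) (\<lambda>j. u ^ j)" for k
  define D where "D = (real m + 1) ^ n - real m ^ n"
  have card: "real (card (SU m n r)) = D"
    unfolding r_def D_def using assms(1) by (rule card_SU_replicate)
  have "SU m n r \<noteq> {}" "Y m n = pmf_of_set (SU m n r) \<bind> (\<lambda>y. map_pmf Suc (Y m (count_list y m)))"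
    unfolding r_def using Y_unfold[OF assms] by simp_all
  then have "E n = (\<Sum>y\<in>SU m n r. u * E (count_list y m)) / D"
    using card
    by (simp add: E_def pmf_expectation_bind_pmf_of_set finite_SU Y_def finite_set_pmf_parkY
        sum_divide_distrib inverse_eq_divide del: parkY.simps)
  also have "(\<Sum>y\<in>SU m n r. u * E (count_list y m))
      = (\<Sum>k=0..n. real (n choose k) * (real m ^ k - real (m - 1) ^ k) * (u * E (n - k)))"
    using sum_SU_count[OF replicate_in_Zm assms(1), where G = "\<lambda>i. u * E i"]
    by (simp add: r_def free_weight_replicate count_list_replicate_self binomial_shift_eq
        sum_subtractf[symmetric] algebra_simps)
  also have "\<dots> = (\<Sum>k=1..n. real (n choose k) * (real m ^ k - real (m - 1) ^ k) * (u * E (n - k)))"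
    by (simp add: sum.atLeast_Suc_atMost)
  finally show ?thesis
    by (simp add: E_def D_def sum_divide_distrib sum_distrib_left algebra_simps)
qed

end
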